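(* Let $D\in\operatorname{Div}(G)$, fix $q\in V(G)$, and define the divisor $D'$ by $[D']=[D]-Q\lfloor L_{(q)}[D]\rfloor$, where $\lfloor\cdot\rfloor$ is the coordinatewise floor. Then $D'\sim D$ and $|D'(v)|<\deg(v)$ for every vertex $v\ne q$.
   Context: $G$ is a finite connected multigraph without loop edges, with vertex set $V(G)=\{v_1,\dots,v_n\}$ and edge set $E(G)$. A divisor is an element $D=\sum_v D(v)(v)$ of the free abelian group $\operatorname{Div}(G)$ on $V(G)$, identified with the integer column vector $[D]$. $Q$ is the Laplacian matrix ($q_{ii}=\deg(v_i)$, and for $i\ne j$, $-q_{ij}$ is the number of edges between $v_i$ and $v_j$). $D_1\sim D_2$ means $[D_1]-[D_2]=Q\mathbf{f}$ for some integer vector $\mathbf{f}$. For $q=v_i$, $Q_i$ is the invertible matrix obtained from $Q$ by deleting the $i$-th row and column, and $L_{(q)}$ is the $n\times n$ matrix obtained from $Q_i^{-1}$ by inserting a zero row and a zero column in position $i$; it satisfies $QL_{(q)}=I+R$, where $R$ has all entries $-1$ in row $i$ and zeros elsewhere. *)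

theory Defs
  imports "Jordan_Normal_Form.Determinant"
begin

text \<open>A finite loopless multigraph on vertex set {0..<n}: m i j is the number of
edges between vertices i and j.\<close>

definition multigraph :: "nat \<Rightarrow> (nat \<Rightarrow> nat \<Rightarrow> nat) \<Rightarrow> bool" where
  "multigraph n m \<longleftrightarrow> (\<forall>i<n. \<forall>j<n. m i j = m j i) \<and> (\<forall>i<n. m i i = 0)"

definition mg_edges :: "nat \<Rightarrow> (nat \<Rightarrow> nat \<Rightarrow> nat) \<Rightarrow> (nat \<times> nat) set" where
  "mg_edges n m = {(a, b). a < n \<and> b < n \<and> 0 < m a b}"

definition mg_connected :: "nat \<Rightarrow> (nat \<Rightarrow> nat \<Rightarrow> nat) \<Rightarrow> bool" where
  "mg_connected n m \<longleftrightarrow> (\<forall>i<n. \<forall>j<n. (i, j) \<in> (mg_edges n m)\<^sup>*)"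

definition mg_deg :: "nat \<Rightarrow> (nat \<Rightarrow> nat \<Rightarrow> nat) \<Rightarrow> nat \<Rightarrow> nat" where
  "mg_deg n m i = (\<Sum>j<n. m i j)"

definition laplacian :: "nat \<Rightarrow> (nat \<Rightarrow> nat \<Rightarrow> nat) \<Rightarrow> int mat" where
  "laplacian n m = mat n n (\<lambda>(i, j). if i = j then int (mg_deg n m i) else - int (m i j))"

definition div_equiv :: "nat \<Rightarrow> (nat \<Rightarrow> nat \<Rightarrow> nat) \<Rightarrow> int vec \<Rightarrow> int vec \<Rightarrow> bool" where
  "div_equiv n m D1 D2 \<longleftrightarrow> (\<exists>f \<in> carrier_vec n. D1 - D2 = laplacian n m *\<^sub>v f)"

definition reduced_laplacian :: "nat \<Rightarrow> (nat \<Rightarrow> nat \<Rightarrow> nat) \<Rightarrow> nat \<Rightarrow> real mat" where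
  "reduced_laplacian n m q = map_mat real_of_int (mat_delete (laplacian n m) q q)"

definition reduced_laplacian_inv :: "nat \<Rightarrow> (nat \<Rightarrow> nat \<Rightarrow> nat) \<Rightarrow> nat \<Rightarrow> real mat" where
  "reduced_laplacian_inv n m q = (THE B. B \<in> carrier_mat (n - 1) (n - 1) \<and>
      reduced_laplacian n m q * B = 1\<^sub>m (n - 1) \<and> B * reduced_laplacian n m q = 1\<^sub>m (n - 1))"

text \<open>L_(q): Q_i^{-1} with a zero row and a zero column inserted in position q.\<close>
definition L_mat :: "nat \<Rightarrow> (nat \<Rightarrow> nat \<Rightarrow> nat) \<Rightarrow> nat \<Rightarrow> real mat" where
  "L_mat n m q = mat n n (\<lambda>(i, j). if i = q \<or> j = q then 0
      else reduced_laplacian_inv n m q $$ (if i < q then i else i - 1, if j < q then j else j - 1))"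

end

theory Submission
  imports Defs
begin

(* Write d for D viewed as a real vector, x = L_(q) d and f = floor x, so that D' = D - Q f.
   The equivalence D' ~ D is immediate since Q f is a principal divisor.  For the bound,
   the key identity is (Q L_(q) d)(v) = d(v) for every v <> q, i.e. the rows v <> q of
   Q L_(q) = I + R.  Hence D'(v) = (Q x)(v) - (Q f)(v) = (Q r)(v) with r = frac x, and
   (Q r)(v) = sum_k m(v,k) (r(v) - r(k)) is a weighted sum of numbers of absolute value < 1
   whose weights add up to deg v > 0. *)

text \<open>skip_idx q enumerates {0..<n} - {q} in increasing order; unskip_idx q is its inverse.
  These describe how the rows and columns of Q_q and L_(q) correspond to those of Q.\<close>

definition skip_idx :: "nat \<Rightarrow> nat \<Rightarrow> nat" where
  "skip_idx q j = (if j < q then j else Suc j)"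

definition unskip_idx :: "nat \<Rightarrow> nat \<Rightarrow> nat" where
  "unskip_idx q k = (if k < q then k else k - 1)"

lemma skip_unskip_idx: "k \<noteq> q \<Longrightarrow> skip_idx q (unskip_idx q k) = k"
  by (auto simp: skip_idx_def unskip_idx_def)

lemma unskip_skip_idx: "unskip_idx q (skip_idx q j) = j"
  by (auto simp: skip_idx_def unskip_idx_def)

lemma unskip_idx_less: "k < n \<Longrightarrow> k \<noteq> q \<Longrightarrow> q < n \<Longrightarrow> unskip_idx q k < n - 1"
  by (auto simp: unskip_idx_def)

lemma skip_idx_less: "j < n - 1 \<Longrightarrow> skip_idx q j < n"
  by (auto simp: skip_idx_def)

lemma skip_idx_neq: "skip_idx q j \<noteq> q"
  by (auto simp: skip_idx_def)

lemma sum_skip_idx: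
  fixes f :: "nat \<Rightarrow> 'a::comm_monoid_add"
  assumes "q < n" and "f q = 0"
  shows "(\<Sum>k<n. f k) = (\<Sum>j<n-1. f (skip_idx q j))"
proof -
  have "(\<Sum>k<n. f k) = (\<Sum>k\<in>{..<n}-{q}. f k)"
    using assms by (simp add: sum.remove)
  also have "\<dots> = (\<Sum>j<n-1. f (skip_idx q j))"
    by (rule sum.reindex_bij_witness[where i = "skip_idx q" and j = "unskip_idx q"])
       (use assms in \<open>auto simp: skip_idx_def unskip_idx_def\<close>)
  finally show ?thesis .
qed

lemma mult_mat_vec_entry:
  "A \<in> carrier_mat r c \<Longrightarrow> v \<in> carrier_vec c \<Longrightarrow> i < r \<Longrightarrow>
   (A *\<^sub>v v) $ i = (\<Sum>j<c. A $$ (i, j) * v $ j)"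
  by (auto simp: scalar_prod_def atLeast0LessThan intro!: sum.cong)

section \<open>The Laplacian and harmonic functions\<close>

lemma laplacian_carrier [simp]: "laplacian n m \<in> carrier_mat n n"
  by (simp add: laplacian_def)

lemma laplacian_entry:
  "i < n \<Longrightarrow> j < n \<Longrightarrow>
   laplacian n m $$ (i, j) = (if i = j then int (mg_deg n m i) else - int (m i j))"
  by (simp add: laplacian_def)

text \<open>Row v of the Laplacian applied to z is the weighted sum of the differences z v - z k
  over the edges at v; this is where looplessness (m v v = 0) is used.\<close>

lemma laplacian_row_differences:
  fixes z :: "nat \<Rightarrow> real"
  assumes mg: "multigraph n m" and v: "v < n"
  shows "(\<Sum>k<n. real_of_int (laplacian n m $$ (v, k)) * z k) =
         (\<Sum>k<n. real (m v k) * (z v - z k))"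
proof -
  have mvv: "m v v = 0" using mg v by (simp add: multigraph_def)
  have "(\<Sum>k<n. real_of_int (laplacian n m $$ (v, k)) * z k)
      = (\<Sum>k<n. (if k = v then real (mg_deg n m v) * z k else 0) - real (m v k) * z k)"
    by (rule sum.cong) (auto simp: laplacian_entry v mvv)
  also have "\<dots> = real (mg_deg n m v) * z v - (\<Sum>k<n. real (m v k) * z k)"
    using v by (simp add: sum_subtractf)
  also have "\<dots> = (\<Sum>k<n. real (m v k) * (z v - z k))"
    by (simp add: mg_deg_def right_diff_distrib sum_subtractf sum_distrib_right)
  finally show ?thesis .
qed

text \<open>In a connected multigraph every vertex other than q has a neighbour (the first step of
  a path to q).\<close>

lemma connected_has_neighbour:
  assumes conn: "mg_connected n m" and "v < n" and "q < n" and "v \<noteq> q"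
  shows "\<exists>b<n. 0 < m v b"
proof -
  have "(v, q) \<in> (mg_edges n m)\<^sup>*" using conn assms by (simp add: mg_connected_def)
  then show ?thesis using \<open>v \<noteq> q\<close>
    by (cases rule: converse_rtranclE) (auto simp: mg_edges_def)
qed

text \<open>A vertex v \<noteq> q where the maximum is attained passes it on to all its
  neighbours, and following a path to q carries it to q.\<close>

definition harmonic_off :: "nat \<Rightarrow> (nat \<Rightarrow> nat \<Rightarrow> nat) \<Rightarrow> nat \<Rightarrow> (nat \<Rightarrow> real) \<Rightarrow> bool" where
  "harmonic_off n m q z \<longleftrightarrow> (\<forall>v<n. v \<noteq> q \<longrightarrow> (\<Sum>k<n. real (m v k) * (z v - z k)) = 0)"

lemma maximum_principle:
  assumes conn: "mg_connected n m" and q: "q < n" and harm: "harmonic_off n m q z"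
    and k: "k < n"
  shows "z k \<le> z q"
proof -
  define M where "M = Max (z ` {..<n})"
  have le_M: "z k \<le> M" if "k < n" for k
    unfolding M_def using that by simp
  obtain a where a: "a < n" "z a = M"
    using Max_in[of "z ` {..<n}"] q unfolding M_def by fastforce
  have max_spreads: "z b = M" if "z c = M" "c < n" "c \<noteq> q" "b < n" "0 < m c b" for b c
  proof -
    have "(\<Sum>k<n. real (m c k) * (z c - z k)) = 0"
      using harm that(2,3) by (simp add: harmonic_off_def)
    moreover have "\<forall>k\<in>{..<n}. 0 \<le> real (m c k) * (z c - z k)"
      using le_M that(1) by auto
    ultimately have "real (m c b) * (z c - z b) = 0"
      using sum_nonneg_eq_0_iff[of "{..<n}" "\<lambda>k. real (m c k) * (z c - z k)"] that(4) by auto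
    then show ?thesis using that by simp
  qed
  have "(a, q) \<in> (mg_edges n m)\<^sup>*" using conn a q by (simp add: mg_connected_def)
  then have "z a = M \<longrightarrow> z q = M"
  proof (induction rule: converse_rtrancl_induct)
    case (step c b)
    then show ?case
      using max_spreads[of c b] by (cases "c = q") (auto simp: mg_edges_def)
  qed simp
  then show ?thesis using a le_M k by simp
qed

text \<open>Applied to z and to -z: a function harmonic off q is constant.\<close>

lemma harmonic_off_constant:
  assumes conn: "mg_connected n m" and q: "q < n" and harm: "harmonic_off n m q z"
    and k: "k < n"
  shows "z k = z q"
proof -
  have "harmonic_off n m q (\<lambda>k. - z k)"
    using harm unfolding harmonic_off_def
    by (simp add: algebra_simps sum_negf sum_subtractf)
  then have "- z k \<le> - z q" by (rule maximum_principle[OF conn q _ k])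
  with maximum_principle[OF conn q harm k] show ?thesis by simp
qed

section \<open>The reduced Laplacian and L_(q)\<close>

lemma reduced_laplacian_carrier: "reduced_laplacian n m q \<in> carrier_mat (n-1) (n-1)"
  unfolding reduced_laplacian_def by (auto intro: mat_delete_carrier simp: laplacian_def)

lemma reduced_laplacian_entry:
  "i < n - 1 \<Longrightarrow> j < n - 1 \<Longrightarrow>
   reduced_laplacian n m q $$ (i, j) =
   real_of_int (laplacian n m $$ (skip_idx q i, skip_idx q j))"
  unfolding reduced_laplacian_def mat_delete_def skip_idx_def by (simp add: laplacian_def)

text \<open>A kernel vector y of Q_q, extended by 0 at q, is harmonic off q, hence constant, hence 0.\<close>

lemma reduced_laplacian_kernel:
  assumes mg: "multigraph n m" and conn: "mg_connected n m" and q: "q < n"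
    and y: "y \<in> carrier_vec (n-1)" and ker: "reduced_laplacian n m q *\<^sub>v y = 0\<^sub>v (n-1)"
  shows "y = 0\<^sub>v (n-1)"
proof -
  define z where "z k = (if k = q then 0 else y $ unskip_idx q k)" for k
  have z_skip: "z (skip_idx q j) = y $ j" for j
    by (simp add: z_def skip_idx_neq unskip_skip_idx)
  have harm: "harmonic_off n m q z"
    unfolding harmonic_off_def
  proof (intro allI impI)
    fix v assume v: "v < n" "v \<noteq> q"
    have v': "unskip_idx q v < n - 1" using unskip_idx_less v q by auto
    have "0 = (reduced_laplacian n m q *\<^sub>v y) $ unskip_idx q v" using ker v' by simp
    also have "\<dots> = (\<Sum>j<n-1. reduced_laplacian n m q $$ (unskip_idx q v, j) * y $ j)"
      by (rule mult_mat_vec_entry[OF reduced_laplacian_carrier y v'])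
    also have "\<dots> = (\<Sum>j<n-1. real_of_int (laplacian n m $$ (v, skip_idx q j)) * z (skip_idx q j))"
      using v' by (intro sum.cong) (auto simp: reduced_laplacian_entry skip_unskip_idx v z_skip)
    also have "\<dots> = (\<Sum>k<n. real_of_int (laplacian n m $$ (v, k)) * z k)"
      by (rule sum_skip_idx[symmetric, OF q]) (simp add: z_def)
    also have "\<dots> = (\<Sum>k<n. real (m v k) * (z v - z k))"
      by (rule laplacian_row_differences[OF mg v(1)])
    finally show "(\<Sum>k<n. real (m v k) * (z v - z k)) = 0" by simp
  qed
  then have z_zero: "z k = 0" if "k < n" for k
    using harmonic_off_constant[OF conn q harm that] by (simp add: z_def)
  have "y $ j = 0" if "j < n - 1" for j
    using z_zero[OF skip_idx_less[OF that]] z_skip[of j] by simp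
  then show ?thesis using y by (intro eq_vecI) auto
qed

text \<open>Hence Q_q is invertible (over the reals), and the definite description in
  reduced_laplacian_inv picks out its unique two-sided inverse.\<close>

lemma reduced_laplacian_inv:
  assumes mg: "multigraph n m" and conn: "mg_connected n m" and q: "q < n"
  shows "reduced_laplacian_inv n m q \<in> carrier_mat (n-1) (n-1)"
    and "reduced_laplacian n m q * reduced_laplacian_inv n m q = 1\<^sub>m (n-1)"
proof -
  let ?A = "reduced_laplacian n m q"
  have A: "?A \<in> carrier_mat (n-1) (n-1)" by (rule reduced_laplacian_carrier)
  have "det ?A \<noteq> 0"
    using det_0_iff_vec_prod_zero_field[OF A] reduced_laplacian_kernel[OF mg conn q] by blast
  from det_non_zero_imp_unit[OF A this]
  obtain B where B: "B \<in> carrier_mat (n-1) (n-1)" "B * ?A = 1\<^sub>m (n-1)" "?A * B = 1\<^sub>m (n-1)"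
    unfolding Units_def ring_mat_def by auto
  have unique: "C = B" if C: "C \<in> carrier_mat (n-1) (n-1)" "C * ?A = 1\<^sub>m (n-1)" for C
  proof -
    have "C = C * (?A * B)" using B(3) C by simp
    also have "\<dots> = (C * ?A) * B"
      using assoc_mult_mat[of C "n-1" "n-1" ?A "n-1" B "n-1"] A B(1) C by simp
    finally show "C = B" using B(1) C by simp
  qed
  have "reduced_laplacian_inv n m q = B"
    unfolding reduced_laplacian_inv_def
  proof (rule the_equality)
    show "B \<in> carrier_mat (n-1) (n-1) \<and> ?A * B = 1\<^sub>m (n-1) \<and> B * ?A = 1\<^sub>m (n-1)"
      using B by blast
  qed (use unique in blast)
  with B show "reduced_laplacian_inv n m q \<in> carrier_mat (n-1) (n-1)"
    and "?A * reduced_laplacian_inv n m q = 1\<^sub>m (n-1)" by simp_all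
qed

lemma L_mat_carrier: "L_mat n m q \<in> carrier_mat n n"
  by (simp add: L_mat_def)

text \<open>The rows v \<noteq> q of Q L_(q) are those of the identity (the relation Q L_(q) = I + R):
  on the coordinates other than q, L_(q) d is Q_q^{-1} applied to d with its q-th entry removed.\<close>

lemma laplacian_L_mat_row:
  assumes mg: "multigraph n m" and conn: "mg_connected n m" and q: "q < n"
    and d: "d \<in> carrier_vec n" and v: "v < n" "v \<noteq> q"
  shows "(\<Sum>k<n. real_of_int (laplacian n m $$ (v, k)) * (L_mat n m q *\<^sub>v d) $ k) = d $ v"
proof -
  let ?A = "reduced_laplacian n m q" and ?B = "reduced_laplacian_inv n m q"
  note B = reduced_laplacian_inv[OF mg conn q]
  define d' where "d' = vec (n-1) (\<lambda>i. d $ skip_idx q i)"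
  have d': "d' \<in> carrier_vec (n-1)" by (simp add: d'_def)
  have v': "unskip_idx q v < n - 1" using unskip_idx_less v q by auto
  have L_q: "(L_mat n m q *\<^sub>v d) $ q = 0"
    unfolding mult_mat_vec_entry[OF L_mat_carrier d q] using q by (simp add: L_mat_def)
  have L_skip: "(L_mat n m q *\<^sub>v d) $ skip_idx q i = (?B *\<^sub>v d') $ i" if i: "i < n - 1" for i
  proof -
    have "(L_mat n m q *\<^sub>v d) $ skip_idx q i = (\<Sum>k<n. L_mat n m q $$ (skip_idx q i, k) * d $ k)"
      by (rule mult_mat_vec_entry[OF L_mat_carrier d skip_idx_less[OF i]])
    also have "\<dots> = (\<Sum>j<n-1. L_mat n m q $$ (skip_idx q i, skip_idx q j) * d $ skip_idx q j)"
      by (rule sum_skip_idx[OF q]) (use q i in \<open>simp add: L_mat_def skip_idx_less\<close>)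
    also have "\<dots> = (\<Sum>j<n-1. ?B $$ (i, j) * d' $ j)"
      using i by (intro sum.cong refl)
        (auto simp: L_mat_def skip_idx_less skip_idx_neq d'_def skip_idx_def)
    also have "\<dots> = (?B *\<^sub>v d') $ i"
      by (rule mult_mat_vec_entry[OF B(1) d' i, symmetric])
    finally show ?thesis .
  qed
  have "(\<Sum>k<n. real_of_int (laplacian n m $$ (v, k)) * (L_mat n m q *\<^sub>v d) $ k)
     = (\<Sum>i<n-1. real_of_int (laplacian n m $$ (v, skip_idx q i)) *
                  (L_mat n m q *\<^sub>v d) $ skip_idx q i)"
    by (rule sum_skip_idx[OF q]) (simp add: L_q)
  also have "\<dots> = (\<Sum>i<n-1. ?A $$ (unskip_idx q v, i) * (?B *\<^sub>v d') $ i)"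
    using v' v by (intro sum.cong refl) (simp add: L_skip reduced_laplacian_entry skip_unskip_idx)
  also have "\<dots> = (?A *\<^sub>v (?B *\<^sub>v d')) $ unskip_idx q v"
    using B(1) d' by (intro mult_mat_vec_entry[OF reduced_laplacian_carrier _ v', symmetric]) auto
  also have "?A *\<^sub>v (?B *\<^sub>v d') = d'"
    using B d' reduced_laplacian_carrier by (metis assoc_mult_mat_vec one_mult_mat_vec)
  also have "d' $ unskip_idx q v = d $ v"
    using v' v by (simp add: d'_def skip_unskip_idx)
  finally show ?thesis .
qed

lemma div_equiv_minus_principal:
  assumes "D \<in> carrier_vec n" and f: "f \<in> carrier_vec n"
  shows "div_equiv n m (D - laplacian n m *\<^sub>v f) D"
  unfolding div_equiv_def
proof
  show "- f \<in> carrier_vec n" using f by simp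
  show "D - laplacian n m *\<^sub>v f - D = laplacian n m *\<^sub>v - f"
    using assms by (intro eq_vecI) (auto simp: laplacian_def)
qed

lemma weighted_fraction_differences_bound:
  fixes r :: "nat \<Rightarrow> real"
  assumes r: "\<And>k. 0 \<le> r k \<and> r k < 1" and b: "b < n" "0 < m v b"
  shows "\<bar>\<Sum>k<n. real (m v k) * (r v - r k)\<bar> < real (mg_deg n m v)"
proof -
  have diff: "\<bar>r v - r k\<bar> < 1" for k using r[of v] r[of k] by linarith
  have "\<bar>\<Sum>k<n. real (m v k) * (r v - r k)\<bar> \<le> (\<Sum>k<n. real (m v k) * \<bar>r v - r k\<bar>)"
    using sum_abs[of "\<lambda>k. real (m v k) * (r v - r k)" "{..<n}"] by (simp add: abs_mult)
  also have "\<dots> < (\<Sum>k<n. real (m v k))"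
  proof (rule sum_strict_mono_ex1)
    show "\<forall>k\<in>{..<n}. real (m v k) * \<bar>r v - r k\<bar> \<le> real (m v k)"
      using diff mult_left_le[of "\<bar>r v - _\<bar>"] by (simp add: less_imp_le)
    show "\<exists>k\<in>{..<n}. real (m v k) * \<bar>r v - r k\<bar> < real (m v k)"
      using b diff[of b] by (intro bexI[of _ b]) auto
  qed simp
  also have "\<dots> = real (mg_deg n m v)" by (simp add: mg_deg_def)
  finally show ?thesis .
qed

lemma reduced_divisor_entry:
  assumes mg: "multigraph n m" and conn: "mg_connected n m" and q: "q < n"
    and D: "D \<in> carrier_vec n" and v: "v < n" "v \<noteq> q"
    and x: "x = L_mat n m q *\<^sub>v map_vec real_of_int D"
  shows "real_of_int ((D - laplacian n m *\<^sub>v map_vec floor x) $ v) =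
         (\<Sum>k<n. real (m v k) * (frac (x $ v) - frac (x $ k)))"
proof -
  let ?Q = "\<lambda>k. laplacian n m $$ (v, k)"
  have x_dim: "x \<in> carrier_vec n"
    unfolding x by (rule mult_mat_vec_carrier[OF L_mat_carrier]) (use D in simp)
  have "real_of_int (D $ v) = (\<Sum>k<n. real_of_int (?Q k) * x $ k)"
    using laplacian_L_mat_row[OF mg conn q _ v, of "map_vec real_of_int D"] D v x by simp
  moreover have "(laplacian n m *\<^sub>v map_vec floor x) $ v = (\<Sum>k<n. ?Q k * \<lfloor>x $ k\<rfloor>)"
    using x_dim v by (simp add: mult_mat_vec_entry[OF laplacian_carrier])
  moreover have "(D - laplacian n m *\<^sub>v map_vec floor x) $ v =
      D $ v - (laplacian n m *\<^sub>v map_vec floor x) $ v"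
    using D v by (simp add: laplacian_def)
  ultimately have "real_of_int ((D - laplacian n m *\<^sub>v map_vec floor x) $ v) =
      (\<Sum>k<n. real_of_int (?Q k) * frac (x $ k))"
    by (simp add: frac_def sum_subtractf[symmetric] right_diff_distrib)
  also have "\<dots> = (\<Sum>k<n. real (m v k) * (frac (x $ v) - frac (x $ k)))"
    by (rule laplacian_row_differences[OF mg v(1)])
  finally show ?thesis .
qed

theorem mainTheorem11:
  fixes n :: nat and m :: "nat \<Rightarrow> nat \<Rightarrow> nat" and q :: nat and D D' :: "int vec"
  assumes "multigraph n m"
    and "mg_connected n m"
    and "q < n"
    and "D \<in> carrier_vec n"
    and "D' = D - laplacian n m *\<^sub>v
           map_vec floor (L_mat n m q *\<^sub>v map_vec real_of_int D)"
  shows "div_equiv n m D' D \<and>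
         (\<forall>v<n. v \<noteq> q \<longrightarrow> \<bar>D' $ v\<bar> < int (mg_deg n m v))"
proof -
  note mg = assms(1) and conn = assms(2) and q = assms(3) and D = assms(4)
  define x where "x = L_mat n m q *\<^sub>v map_vec real_of_int D"
  have D': "D' = D - laplacian n m *\<^sub>v map_vec floor x" using assms(5) by (simp add: x_def)
  have "x \<in> carrier_vec n"
    unfolding x_def by (rule mult_mat_vec_carrier[OF L_mat_carrier]) (use D in simp)
  then have equiv: "div_equiv n m D' D"
    unfolding D' by (intro div_equiv_minus_principal D) simp
  have "\<bar>D' $ v\<bar> < int (mg_deg n m v)" if v: "v < n" "v \<noteq> q" for v
  proof -
    obtain b where "b < n" "0 < m v b" using connected_has_neighbour[OF conn v(1) q v(2)] by blast
    then have "\<bar>\<Sum>k<n. real (m v k) * (frac (x $ v) - frac (x $ k))\<bar> < real (mg_deg n m v)"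
      by (intro weighted_fraction_differences_bound) (auto simp: frac_lt_1)
    then show ?thesis
      using reduced_divisor_entry[OF mg conn q D v x_def] unfolding D' by linarith
  qed
  with equiv show ?thesis by blast
qed

end
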